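(* Let $A$ be a linear matrix of the form $\begin{bmatrix} C_n\\ F\end{bmatrix}$. If $g=g(A)<n$, then there exists a matrix $F'$ consisting of $h\ge1$ rows of $F$ such that $\begin{bmatrix} C_n\\ F'\end{bmatrix}$ contains a submatrix congruent to $C_g$ as an up-matrix.
   Context: A $\{0,1\}$-matrix is linear if it has no $2\times2$ submatrix with all entries $1$. Matrices are congruent if one is obtained from the other by permuting rows and columns. $C_n$ is the $n\times n$ matrix with $c_{i,j}=1$ iff $j\in\{i,i+1\}$ (indices mod $n$). For a $\{0,1\}$-matrix $A$, $g(A)=\infty$ if $A$ contains no submatrix congruent to $C_k$ for odd $k$, and otherwise $g(A)$ is the least odd $k$ such that $A$ has a submatrix congruent to $C_k$. The up-matrix $M^\uparrow$ of $M$ is the row submatrix consisting of the rows $r$ for which no other row $r'\neq r$ satisfies $r\le r'$ componentwise. A matrix $M$ contains $N$ as an up-matrix if for some set $S$ of columns, the up-matrix of the column submatrix of $M$ on $S$ equals $N$. *)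

theory Defs
  imports Main "HOL-Library.Extended_Nat"
begin

text \<open>A {0,1}-matrix is represented by an entry function M :: nat => nat => bool
  (True = entry 1), together with an explicit set of row indices and
  the column set {..<n}.\<close>

definition Cmat :: "nat \<Rightarrow> nat \<Rightarrow> nat \<Rightarrow> bool" where
  "Cmat k i j \<longleftrightarrow> (j = i \<or> j = Suc i mod k)"

definition linear_mat :: "(nat \<Rightarrow> nat \<Rightarrow> bool) \<Rightarrow> nat set \<Rightarrow> nat \<Rightarrow> bool" where
  "linear_mat M R n \<longleftrightarrow>
     \<not> (\<exists>i1\<in>R. \<exists>i2\<in>R. \<exists>j1<n. \<exists>j2<n. i1 \<noteq> i2 \<and> j1 \<noteq> j2 \<and>
          M i1 j1 \<and> M i1 j2 \<and> M i2 j1 \<and> M i2 j2)"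

definition has_C_sub :: "(nat \<Rightarrow> nat \<Rightarrow> bool) \<Rightarrow> nat set \<Rightarrow> nat \<Rightarrow> nat \<Rightarrow> bool" where
  "has_C_sub M R n k \<longleftrightarrow>
     (\<exists>f g. inj_on f {..<k} \<and> f ` {..<k} \<subseteq> R \<and>
            inj_on g {..<k} \<and> g ` {..<k} \<subseteq> {..<n} \<and>
            (\<forall>i<k. \<forall>j<k. M (f i) (g j) = Cmat k i j))"

definition odd_girth :: "(nat \<Rightarrow> nat \<Rightarrow> bool) \<Rightarrow> nat set \<Rightarrow> nat \<Rightarrow> enat" where
  "odd_girth M R n =
     (if \<exists>k. odd k \<and> 3 \<le> k \<and> has_C_sub M R n k
      then enat (LEAST k. odd k \<and> 3 \<le> k \<and> has_C_sub M R n k) else \<infinity>)"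

definition row_on :: "(nat \<Rightarrow> nat \<Rightarrow> bool) \<Rightarrow> nat set \<Rightarrow> nat \<Rightarrow> nat \<Rightarrow> bool" where
  "row_on M S r = (\<lambda>j. j \<in> S \<and> M r j)"

text \<open>The rows of the up-matrix of the column submatrix of M on S, as a set of row vectors:
  those rows r such that no row r' with a different vector dominates r componentwise.\<close>
definition up_rows :: "(nat \<Rightarrow> nat \<Rightarrow> bool) \<Rightarrow> nat set \<Rightarrow> nat set \<Rightarrow> (nat \<Rightarrow> bool) set" where
  "up_rows M R S =
     {row_on M S r | r. r \<in> R \<and>
        \<not> (\<exists>r'\<in>R. row_on M S r' \<noteq> row_on M S r \<and> row_on M S r \<le> row_on M S r')}"

definition contains_C_up :: "(nat \<Rightarrow> nat \<Rightarrow> bool) \<Rightarrow> nat set \<Rightarrow> nat \<Rightarrow> nat \<Rightarrow> bool" where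
  "contains_C_up M R n k \<longleftrightarrow>
     (\<exists>S \<subseteq> {..<n}. \<exists>f g. bij_betw f {..<k} (up_rows M R S) \<and> bij_betw g {..<k} S \<and>
            (\<forall>i<k. \<forall>j<k. f i (g j) = Cmat k i j))"

definition stack :: "nat \<Rightarrow> (nat \<Rightarrow> nat \<Rightarrow> bool) \<Rightarrow> nat \<Rightarrow> nat \<Rightarrow> bool" where
  "stack n F i j = (if i < n then Cmat n i j else F (i - n) j)"

end

theory Submission
  imports Defs "HOL-Number_Theory.Cong"
begin

(*
  Take a copy of C_g (rows f, columns c) realising the odd girth g. If all of its rows were
  rows of C_n, its column set would be closed under the cyclic successor mod n, forcing g \<ge> n;
  so some of its rows come from F, and F' consists of those. Restricted to the columns of the
  copy, each of its rows is maximal, since a row dominating it would form an all-ones 2x2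
  submatrix with it. Every other row is a row of C_n and meets these columns at most once:
  meeting two adjacent ones again contradicts linearity, and meeting two non-adjacent ones
  splits the cycle into two arcs, one of which closes to a shorter odd cycle. So all other rows
  are dominated, and the up-matrix is exactly the copy of C_g.
*)

definition is_C_sub ::
    "(nat \<Rightarrow> nat \<Rightarrow> bool) \<Rightarrow> nat set \<Rightarrow> nat \<Rightarrow> nat \<Rightarrow> (nat \<Rightarrow> nat) \<Rightarrow> (nat \<Rightarrow> nat) \<Rightarrow> bool" where
  "is_C_sub M R n k f c \<longleftrightarrow> inj_on f {..<k} \<and> f ` {..<k} \<subseteq> R \<and>
     inj_on c {..<k} \<and> c ` {..<k} \<subseteq> {..<n} \<and> (\<forall>i<k. \<forall>j<k. M (f i) (c j) = Cmat k i j)"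

lemma has_C_sub_iff_is_C_sub: "has_C_sub M R n k \<longleftrightarrow> (\<exists>f c. is_C_sub M R n k f c)"
  by (simp add: has_C_sub_def is_C_sub_def)

lemma is_C_subD:
  assumes "is_C_sub M R n k f c"
  shows "inj_on f {..<k}" "\<And>i. i < k \<Longrightarrow> f i \<in> R" "inj_on c {..<k}" "\<And>j. j < k \<Longrightarrow> c j < n"
    and "\<And>i j. i < k \<Longrightarrow> j < k \<Longrightarrow> M (f i) (c j) = Cmat k i j"
  using assms by (auto simp: is_C_sub_def)

lemma is_C_sub_row_hits:
  assumes "is_C_sub M R n k f c" "i < k"
  shows "M (f i) (c i)" "M (f i) (c (Suc i mod k))"
  using is_C_subD(5)[OF assms(1)] assms(2) by (simp_all add: Cmat_def)

lemma is_C_sub_rows_subset: "is_C_sub M R n k f c \<Longrightarrow> f ` {..<k} \<subseteq> R' \<Longrightarrow> is_C_sub M R' n k f c"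
  by (simp add: is_C_sub_def)

lemma linear_matD:
  assumes "linear_mat M R n" "i1 \<in> R" "i2 \<in> R" "j1 < n" "j2 < n" "i1 \<noteq> i2" "j1 \<noteq> j2"
    and "M i1 j1" "M i1 j2" "M i2 j1" "M i2 j2"
  shows False
  using assms unfolding linear_mat_def by blast

lemma linear_mat_mono: "linear_mat M R n \<Longrightarrow> R' \<subseteq> R \<Longrightarrow> linear_mat M R' n"
  unfolding linear_mat_def by blast

lemma odd_girth_eq_enatD:
  assumes "odd_girth M R n = enat g"
  shows "odd g" "3 \<le> g" "has_C_sub M R n g"
    and "\<And>k. odd k \<Longrightarrow> 3 \<le> k \<Longrightarrow> has_C_sub M R n k \<Longrightarrow> g \<le> k"
proof -
  let ?P = "\<lambda>k. odd k \<and> 3 \<le> k \<and> has_C_sub M R n k"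
  have ex: "\<exists>k. ?P k"
    using assms by (auto simp: odd_girth_def split: if_splits)
  then have g: "g = (LEAST k. ?P k)"
    using assms by (simp add: odd_girth_def)
  show "odd g" "3 \<le> g" "has_C_sub M R n g"
    using LeastI_ex[OF ex] by (simp_all add: g)
  show "\<And>k. odd k \<Longrightarrow> 3 \<le> k \<Longrightarrow> has_C_sub M R n k \<Longrightarrow> g \<le> k"
    by (simp add: g Least_le)
qed

lemma inj_on_add_mod: "inj_on (\<lambda>i. (i + a) mod k) {..<k::nat}"
proof (rule inj_onI)
  fix x y :: nat assume "x \<in> {..<k}" "y \<in> {..<k}" "(x + a) mod k = (y + a) mod k"
  then show "x = y"
    using cong_add_rcancel_nat[of x a y k] by (simp add: cong_def)
qed

lemma Cmat_add_mod:
  assumes "i < k" "j < k"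
  shows "Cmat k ((i + a) mod k) ((j + a) mod k) = Cmat k i j"
proof -
  have eq: "(x + a) mod k = (y + a) mod k \<longleftrightarrow> x = y" if "x < k" "y < k" for x y
    using inj_onD[OF inj_on_add_mod] that by blast
  have "Suc ((i + a) mod k) mod k = (Suc i mod k + a) mod k"
    by (simp add: mod_Suc_eq mod_add_left_eq)
  then show ?thesis
    using eq[OF assms(2) assms(1)] eq[OF assms(2), of "Suc i mod k"] assms
    by (simp add: Cmat_def)
qed

lemma is_C_sub_rotate:
  assumes "is_C_sub M R n k f c"
  shows "is_C_sub M R n k (\<lambda>i. f ((i + a) mod k)) (\<lambda>i. c ((i + a) mod k))"
proof -
  have maps: "(\<lambda>i. (i + a) mod k) ` {..<k} \<subseteq> {..<k}" by auto
  have "inj_on (f \<circ> (\<lambda>i. (i + a) mod k)) {..<k}" "inj_on (c \<circ> (\<lambda>i. (i + a) mod k)) {..<k}"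
    using comp_inj_on[OF inj_on_add_mod inj_on_subset[OF is_C_subD(1)[OF assms] maps]]
      comp_inj_on[OF inj_on_add_mod inj_on_subset[OF is_C_subD(3)[OF assms] maps]] .
  moreover have "(\<lambda>i. f ((i + a) mod k)) ` {..<k} \<subseteq> R" "(\<lambda>i. c ((i + a) mod k)) ` {..<k} \<subseteq> {..<n}"
    using assms maps by (auto simp: is_C_sub_def)
  ultimately show ?thesis
    using assms Cmat_add_mod by (simp add: is_C_sub_def o_def)
qed

lemma is_C_sub_arc:
  assumes C: "is_C_sub M R n k f c" and r: "r \<in> R" "r \<notin> f ` {..<k}"
    and q: "0 < q" "q < k" and hits: "M r (c 0)" "M r (c q)"
    and only: "\<forall>j<k. M r (c j) \<longrightarrow> j = 0 \<or> j = q"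
  shows "is_C_sub M R n (Suc q) (\<lambda>i. if i < q then f i else r) c"
proof -
  note C' = is_C_subD[OF C]
  have "inj_on (\<lambda>i. if i < q then f i else r) {..<Suc q}"
    using C'(1) r(2) q by (auto simp: inj_on_def)
  moreover have "inj_on c {..<Suc q}"
    using C'(3) q by (auto intro: inj_on_subset)
  moreover have "M (if i < q then f i else r) (c j) = Cmat (Suc q) i j"
    if "i < Suc q" "j < Suc q" for i j
  proof (cases "i < q")
    case True
    then show ?thesis using C'(5)[of i j] that q by (auto simp: Cmat_def)
  next
    case False
    then have "i = q" using that(1) by simp
    moreover have "j < k" using that(2) q by simp
    then have "M r (c j) \<longleftrightarrow> j = 0 \<or> j = q"
      using only hits by auto
    ultimately show ?thesis by (auto simp: Cmat_def)
  qed
  ultimately show ?thesis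
    using C'(2,4) r(1) q by (auto simp: is_C_sub_def)
qed

lemma is_C_sub_chord:
  assumes C: "is_C_sub M R n k f c" and r: "r \<in> R" "r \<notin> f ` {..<k}"
    and pq: "p < k" "q < k" "p \<noteq> q" and hits: "M r (c p)" "M r (c q)"
    and only: "\<forall>j<k. M r (c j) \<longrightarrow> j = p \<or> j = q"
  shows "has_C_sub M R n (Suc ((q + k - p) mod k))"
proof -
  define d where "d = (q + k - p) mod k"
  have C_rot: "is_C_sub M R n k (\<lambda>i. f ((i + p) mod k)) (\<lambda>i. c ((i + p) mod k))"
    by (rule is_C_sub_rotate[OF C])
  have d_q: "(d + p) mod k = q"
  proof -
    have "(d + p) mod k = (q + k - p + p) mod k" by (simp add: d_def mod_add_left_eq)
    also have "\<dots> = q" using pq by simp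
    finally show ?thesis .
  qed
  have d: "0 < d" "d < k"
    using d_q pq by (cases "d = 0", simp_all add: d_def)
  have rot_eq: "(j + p) mod k = (j' + p) mod k \<longleftrightarrow> j = j'" if "j < k" "j' < k" for j j'
    using inj_onD[OF inj_on_add_mod] that by blast
  have "is_C_sub M R n (Suc d) (\<lambda>i. if i < d then f ((i + p) mod k) else r) (\<lambda>i. c ((i + p) mod k))"
  proof (rule is_C_sub_arc[OF C_rot r(1) _ d(1,2)])
    show "r \<notin> (\<lambda>i. f ((i + p) mod k)) ` {..<k}" using r(2) pq by auto
    show "M r (c ((0 + p) mod k))" "M r (c ((d + p) mod k))" using hits d_q pq by simp_all
    show "\<forall>j<k. M r (c ((j + p) mod k)) \<longrightarrow> j = 0 \<or> j = d"
    proof (intro allI impI)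
      fix j assume "j < k" "M r (c ((j + p) mod k))"
      then have "(j + p) mod k = (0 + p) mod k \<or> (j + p) mod k = (d + p) mod k"
        using only d_q pq by simp
      then show "j = 0 \<or> j = d"
        using rot_eq[OF \<open>j < k\<close>, of 0] rot_eq[OF \<open>j < k\<close> d(2)] d by auto
    qed
  qed
  then show ?thesis by (auto simp: has_C_sub_iff_is_C_sub d_def)
qed

lemma chord_arc_lengths:
  fixes p q k :: nat
  assumes "p < k" "q < k" "p \<noteq> q"
  shows "(q + k - p) mod k + (p + k - q) mod k = k" "0 < (q + k - p) mod k"
    and "(q + k - p) mod k = 1 \<longleftrightarrow> q = Suc p mod k"
proof -
  have "(q + k - p) mod k = (if p < q then q - p else k - (p - q))"
    "(p + k - q) mod k = (if q < p then p - q else k - (q - p))"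
    using assms by (auto simp: le_mod_geq)
  then show "(q + k - p) mod k + (p + k - q) mod k = k" "0 < (q + k - p) mod k"
    and "(q + k - p) mod k = 1 \<longleftrightarrow> q = Suc p mod k"
    using assms by (auto simp: mod_Suc)
qed

lemma odd_C_sub_chord_shorter:
  assumes C: "is_C_sub M R n k f c" and "odd k" and r: "r \<in> R" "r \<notin> f ` {..<k}"
    and pq: "p < k" "q < k" "p \<noteq> q" and hits: "M r (c p)" "M r (c q)"
    and only: "\<forall>j<k. M r (c j) \<longrightarrow> j = p \<or> j = q"
    and apart: "q \<noteq> Suc p mod k" "p \<noteq> Suc q mod k"
  shows "\<exists>k'. odd k' \<and> 3 \<le> k' \<and> k' < k \<and> has_C_sub M R n k'"
proof -
  define d e where "d = (q + k - p) mod k" and "e = (p + k - q) mod k"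
  have arcs: "d + e = k" "0 < d" "0 < e" "d \<noteq> 1" "e \<noteq> 1"
    using chord_arc_lengths[OF pq] chord_arc_lengths[OF pq(2,1) pq(3)[symmetric]] apart
    by (simp_all add: d_def e_def)
  have closed: "has_C_sub M R n (Suc d)" "has_C_sub M R n (Suc e)"
    using is_C_sub_chord[OF C r pq hits only] is_C_sub_chord[OF C r pq(2,1) pq(3)[symmetric] hits(2,1)] only
    by (auto simp: d_def e_def)
  show ?thesis
  proof (cases "even d")
    case True
    with arcs closed \<open>odd k\<close> show ?thesis by (intro exI[of _ "Suc d"]) auto
  next
    case False
    with arcs closed \<open>odd k\<close> show ?thesis by (intro exI[of _ "Suc e"]) auto
  qed
qed

lemma minimal_odd_C_sub_no_chord:
  assumes C: "is_C_sub M R n k f c" and "odd k" and lin: "linear_mat M R n"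
    and minimal: "\<And>k'. odd k' \<Longrightarrow> 3 \<le> k' \<Longrightarrow> has_C_sub M R n k' \<Longrightarrow> k \<le> k'"
    and r: "r \<in> R" "r \<notin> f ` {..<k}"
    and pq: "p < k" "q < k" "p \<noteq> q" and hits: "M r (c p)" "M r (c q)"
    and only: "\<forall>j<k. M r (c j) \<longrightarrow> j = p \<or> j = q"
  shows False
proof -
  note C' = is_C_subD[OF C]
  have not_adjacent: "j \<noteq> Suc i mod k"
    if "i < k" "j < k" "i \<noteq> j" "M r (c i)" "M r (c j)" for i j
  proof
    assume j: "j = Suc i mod k"
    have "f i \<noteq> r" "c i \<noteq> c j"
      using r(2) that C'(3) by (auto dest: inj_onD)
    then show False
      using linear_matD[OF lin C'(2) r(1) C'(4) C'(4), of i i j] that j is_C_sub_row_hits[OF C]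
      by auto
  qed
  obtain k' where "odd k'" "3 \<le> k'" "k' < k" "has_C_sub M R n k'"
    using odd_C_sub_chord_shorter[OF C \<open>odd k\<close> r pq hits only] not_adjacent pq hits by metis
  then show False using minimal by fastforce
qed

lemma Suc_Suc_mod_neq:
  fixes i k :: nat
  assumes "i < k" "3 \<le> k"
  shows "Suc (Suc i mod k) mod k \<noteq> i"
  using assms by (auto simp: mod_Suc)

lemma is_C_sub_row_on:
  assumes C: "is_C_sub M R n k f c" and "i < k"
  shows "row_on M (c ` {..<k}) (f i) = (\<lambda>x. x = c i \<or> x = c (Suc i mod k))"
proof
  fix x
  have "Suc i mod k < k" using \<open>i < k\<close> by simp
  then show "row_on M (c ` {..<k}) (f i) x = (x = c i \<or> x = c (Suc i mod k))"
    using is_C_subD(5)[OF C \<open>i < k\<close>] \<open>i < k\<close> by (auto simp: row_on_def Cmat_def)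
qed

lemma contains_C_up_if_outside_rows_meet_once:
  assumes C: "is_C_sub M R n k f c" and "3 \<le> k" and lin: "linear_mat M R n"
    and once: "\<And>r p q. r \<in> R \<Longrightarrow> r \<notin> f ` {..<k} \<Longrightarrow> p < k \<Longrightarrow> q < k \<Longrightarrow>
                 M r (c p) \<Longrightarrow> M r (c q) \<Longrightarrow> p = q"
  shows "contains_C_up M R n k"
proof -
  note C' = is_C_subD[OF C]
  define S where "S = c ` {..<k}"
  have rows: "\<And>i. i < k \<Longrightarrow> row_on M S (f i) = (\<lambda>x. x = c i \<or> x = c (Suc i mod k))"
    unfolding S_def using is_C_sub_row_on[OF C] .
  have succ: "Suc i mod k < k" "Suc i mod k \<noteq> i" if "i < k" for i
    using that \<open>3 \<le> k\<close> by (auto simp: mod_Suc)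
  have c_eq: "c i = c j \<longleftrightarrow> i = j" if "i < k" "j < k" for i j
    using C'(3) that by (auto dest: inj_onD)
  have inj: "inj_on (\<lambda>i. row_on M S (f i)) {..<k}"
  proof (rule inj_onI)
    fix i i' assume "i \<in> {..<k}" "i' \<in> {..<k}" "row_on M S (f i) = row_on M S (f i')"
    then have "i' = i \<or> i' = Suc i mod k" "i = i' \<or> i = Suc i' mod k"
      using rows fun_cong[of _ _ "c i"] fun_cong[of _ _ "c i'"] c_eq succ by (metis lessThan_iff)+
    moreover have "Suc (Suc i mod k) mod k \<noteq> i"
      using Suc_Suc_mod_neq \<open>i \<in> {..<k}\<close> \<open>3 \<le> k\<close> by simp
    ultimately show "i = i'" by auto
  qed
  have maximal: "row_on M S r' = row_on M S (f i)"
    if "i < k" "r' \<in> R" "row_on M S (f i) \<le> row_on M S r'" for i r'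
  proof (rule ccontr)
    assume ne: "row_on M S r' \<noteq> row_on M S (f i)"
    have "row_on M S (f i) (c i)" "row_on M S (f i) (c (Suc i mod k))"
      using rows[OF that(1)] by simp_all
    then have "M r' (c i)" "M r' (c (Suc i mod k))"
      using that(3) by (auto simp: le_fun_def row_on_def)
    then show False
      using linear_matD[OF lin that(2) C'(2)[OF that(1)] C'(4) C'(4)] is_C_sub_row_hits[OF C that(1)]
        ne c_eq succ that(1) by blast
  qed
  have dominated: "\<exists>i<k. row_on M S r \<le> row_on M S (f i) \<and> row_on M S r \<noteq> row_on M S (f i)"
    if r: "r \<in> R" "r \<notin> f ` {..<k}" for r
  proof -
    obtain p where p: "p < k" "\<forall>j<k. M r (c j) \<longrightarrow> j = p"
    proof (cases "\<exists>j<k. M r (c j)")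
      case True
      then show ?thesis using that once[OF r] by blast
    next
      case False
      then show ?thesis using that[of 0] \<open>3 \<le> k\<close> by auto
    qed
    have le: "row_on M S r \<le> row_on M S (f p)"
    proof (intro le_funI le_boolI)
      fix x assume "row_on M S r x"
      then obtain j where "j < k" "x = c j" "M r (c j)" by (auto simp: row_on_def S_def)
      then show "row_on M S (f p) x" using p rows[OF p(1)] by simp
    qed
    have "row_on M S (f p) (c (Suc p mod k))" using rows[OF p(1)] by simp
    moreover have "\<not> M r (c (Suc p mod k))"
      using p(2) succ[OF p(1)] by blast
    then have "\<not> row_on M S r (c (Suc p mod k))" by (simp add: row_on_def)
    ultimately have "row_on M S r \<noteq> row_on M S (f p)" by metis
    with le p(1) show ?thesis by blast
  qed
  have "up_rows M R S = (\<lambda>i. row_on M S (f i)) ` {..<k}"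
  proof (intro equalityI subsetI)
    fix x assume "x \<in> up_rows M R S"
    then obtain r where x: "x = row_on M S r" "r \<in> R"
      and top: "\<not> (\<exists>r'\<in>R. row_on M S r' \<noteq> row_on M S r \<and> row_on M S r \<le> row_on M S r')"
      unfolding up_rows_def by blast
    show "x \<in> (\<lambda>i. row_on M S (f i)) ` {..<k}"
    proof (cases "r \<in> f ` {..<k}")
      case True
      then show ?thesis using x(1) by blast
    next
      case False
      then obtain i where "i < k" "row_on M S r \<le> row_on M S (f i)" "row_on M S r \<noteq> row_on M S (f i)"
        using dominated[OF x(2)] by blast
      then show ?thesis using top C'(2)[OF \<open>i < k\<close>] by metis
    qed
  next
    fix x assume "x \<in> (\<lambda>i. row_on M S (f i)) ` {..<k}"
    then obtain i where "i < k" "x = row_on M S (f i)" by blast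
    then show "x \<in> up_rows M R S"
      using maximal[OF \<open>i < k\<close>] C'(2)[OF \<open>i < k\<close>] unfolding up_rows_def by blast
  qed
  moreover have "S \<subseteq> {..<n}" "bij_betw c {..<k} S"
    using C'(3,4) by (auto simp: S_def bij_betw_def)
  moreover have "\<forall>i<k. \<forall>j<k. row_on M S (f i) (c j) = Cmat k i j"
    using C'(5) by (simp add: row_on_def S_def)
  ultimately show ?thesis
    unfolding contains_C_up_def using inj
    by (intro exI[of _ S] exI[of _ "\<lambda>i. row_on M S (f i)"] exI[of _ c] conjI) (simp_all add: bij_betw_def)
qed

lemma stack_upper_row: "r < n \<Longrightarrow> stack n F r x \<longleftrightarrow> x = r \<or> x = Suc r mod n"
  by (simp add: stack_def Cmat_def)

lemma Suc_mod_closed_covers: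
  fixes n a :: nat
  assumes "a \<in> A" "a < n" and closed: "\<And>v. v \<in> A \<Longrightarrow> Suc v mod n \<in> A"
  shows "{..<n} \<subseteq> A"
proof
  have steps: "(a + j) mod n \<in> A" for j
  proof (induction j)
    case 0
    then show ?case using assms(1,2) by simp
  next
    case (Suc j)
    then show ?case using closed[OF Suc] by (simp add: mod_Suc_eq)
  qed
  fix x assume "x \<in> {..<n}"
  then have "x = (a + (n - a + x)) mod n" using \<open>a < n\<close> by simp
  then show "x \<in> A" using steps by metis
qed

lemma is_C_sub_upper_rows_length:
  assumes C: "is_C_sub (stack n F) R n k f c" and upper: "f ` {..<k} \<subseteq> {..<n}" and "2 \<le> k"
  shows "n \<le> k"
proof -
  note C' = is_C_subD[OF C]
  define S where "S = c ` {..<k}"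
  have cols: "{f i, Suc (f i) mod n} = {c i, c (Suc i mod k)}" if "i < k" for i
  proof -
    have "Suc i mod k < k" "Suc i mod k \<noteq> i" using that \<open>2 \<le> k\<close> by (auto simp: mod_Suc)
    then have "c i \<noteq> c (Suc i mod k)" using C'(3) that by (auto dest: inj_onD)
    moreover have "c i \<in> {f i, Suc (f i) mod n}" "c (Suc i mod k) \<in> {f i, Suc (f i) mod n}"
      using is_C_sub_row_hits[OF C that] stack_upper_row[of "f i" n F] upper that by auto
    ultimately show ?thesis by (auto simp: doubleton_eq_iff)
  qed
  have "f ` {..<k} \<subseteq> S" using cols by (force simp: S_def)
  moreover have "card (f ` {..<k}) = card S"
    using C'(1,3) by (simp add: S_def card_image)
  ultimately have S_rows: "S = f ` {..<k}"
    using card_subset_eq[of S "f ` {..<k}"] by (simp add: S_def)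
  have "{..<n} \<subseteq> S"
  proof (rule Suc_mod_closed_covers)
    show "c 0 \<in> S" "c 0 < n" using C'(4) \<open>2 \<le> k\<close> by (auto simp: S_def)
    show "Suc v mod n \<in> S" if v: "v \<in> S" for v
    proof -
      obtain i where "i < k" "v = f i" using v S_rows by auto
      then have "Suc v mod n \<in> {c i, c (Suc i mod k)}" using cols by blast
      then show ?thesis using \<open>i < k\<close> by (auto simp: S_def)
    qed
  qed
  then have "card {..<n} \<le> card S" by (intro card_mono) (auto simp: S_def)
  also have "\<dots> \<le> k" unfolding S_def using card_image_le by fastforce
  finally show ?thesis by simp
qed

lemma minimal_odd_C_sub_upper_row_meets_once:
  assumes C: "is_C_sub (stack n F) R n k f c" and "odd k" and lin: "linear_mat (stack n F) R n"
    and minimal: "\<And>k'. odd k' \<Longrightarrow> 3 \<le> k' \<Longrightarrow> has_C_sub (stack n F) R n k' \<Longrightarrow> k \<le> k'"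
    and r: "r \<in> R" "r \<notin> f ` {..<k}" "r < n"
    and pq: "p < k" "q < k" and hits: "stack n F r (c p)" "stack n F r (c q)"
  shows "p = q"
proof (rule ccontr)
  assume "p \<noteq> q"
  have only: "\<forall>j<k. stack n F r (c j) \<longrightarrow> j = p \<or> j = q"
  proof (intro allI impI)
    fix j assume "j < k" "stack n F r (c j)"
    then have "c j = c p \<or> c j = c q"
      using \<open>p \<noteq> q\<close> pq hits is_C_subD(3)[OF C] stack_upper_row[OF r(3)]
      by (metis inj_onD lessThan_iff)
    then show "j = p \<or> j = q"
      using is_C_subD(3)[OF C] pq \<open>j < k\<close> by (auto dest: inj_onD)
  qed
  show False
    using minimal_odd_C_sub_no_chord[OF C \<open>odd k\<close> lin minimal r(1,2) pq \<open>p \<noteq> q\<close> hits only] .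
qed

theorem lemma4:
  fixes n m g :: nat and F :: "nat \<Rightarrow> nat \<Rightarrow> bool"
  assumes lin: "linear_mat (stack n F) {..<n+m} n"
    and gA: "odd_girth (stack n F) {..<n+m} n = enat g"
    and glt: "g < n"
  shows "\<exists>H. H \<subseteq> {..<m} \<and> H \<noteq> {} \<and>
           contains_C_up (stack n F) ({..<n} \<union> (\<lambda>i. n + i) ` H) n g"
proof -
  note girth = odd_girth_eq_enatD[OF gA]
  obtain f c where C: "is_C_sub (stack n F) {..<n+m} n g f c"
    using girth(3) by (auto simp: has_C_sub_iff_is_C_sub)
  define H where "H = {h. h < m \<and> n + h \<in> f ` {..<g}}"
  define R where "R = {..<n} \<union> (\<lambda>i. n + i) ` H"
  have "R \<subseteq> {..<n+m}" by (auto simp: R_def H_def)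
  have f_R: "f ` {..<g} \<subseteq> R"
  proof
    fix x assume x: "x \<in> f ` {..<g}"
    then have "x < n + m" using is_C_subD(2)[OF C] by auto
    show "x \<in> R"
    proof (cases "x < n")
      case False
      then have "x - n \<in> H" "x = n + (x - n)" using x \<open>x < n + m\<close> by (auto simp: H_def)
      then show ?thesis unfolding R_def by blast
    qed (simp add: R_def)
  qed
  have "H \<noteq> {}"
  proof
    assume "H = {}"
    then have "f ` {..<g} \<subseteq> {..<n}" using f_R by (simp add: R_def)
    moreover have "2 \<le> g" using girth(2) by simp
    ultimately show False using is_C_sub_upper_rows_length[OF C] glt by fastforce
  qed
  moreover have "contains_C_up (stack n F) R n g"
  proof (rule contains_C_up_if_outside_rows_meet_once[OF is_C_sub_rows_subset[OF C f_R] girth(2)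
        linear_mat_mono[OF lin \<open>R \<subseteq> {..<n+m}\<close>]])
    fix r p q assume r: "r \<in> R" "r \<notin> f ` {..<g}" and "p < g" "q < g"
      and "stack n F r (c p)" "stack n F r (c q)"
    moreover have "r < n" using r by (auto simp: R_def H_def)
    ultimately show "p = q"
      using minimal_odd_C_sub_upper_row_meets_once[OF C girth(1) lin girth(4)] by simp
  qed
  moreover have "H \<subseteq> {..<m}" by (auto simp: H_def)
  ultimately show ?thesis unfolding R_def by blast
qed

end
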